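(* Let $n$ be a positive integer, $g=3n+1$, and let $G$ be a pure $(2n)$-sparse gapset of genus $g$ with depth $q$. Then $G$ is symmetric if and only if $q=4$.
   Context: A gapset is a finite set $G\subset\mathbb{N}=\{1,2,\dots\}$ such that whenever $z\in G$ and $z=x+y$ with $x,y\in\mathbb{N}$, then $x\in G$ or $y\in G$; its genus is $g=\#G$. Write $G=\{\ell_1<\dots<\ell_g\}$. Multiplicity $m(G)=\min\{s\in\mathbb{N}:s\notin G\}$; conductor $c(G)=\min\{s\in\mathbb{N}: s+t\notin G\ \forall t\in\mathbb{N}_0\}$; Frobenius number $F(G)=c(G)-1=\ell_g$; depth $q(G)=\lceil c(G)/m(G)\rceil$. $G$ is symmetric if $F(G)=2g-1$. $G$ is pure $\kappa$-sparse if $\ell_{i+1}-\ell_i\le\kappa$ for all $i$ with equality for some $i$. *)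

theory Defs
  imports Complex_Main
begin

definition gapset :: "nat set \<Rightarrow> bool" where
  "gapset G \<longleftrightarrow> finite G \<and> 0 \<notin> G \<and>
     (\<forall>z\<in>G. \<forall>x y. 0 < x \<and> 0 < y \<and> z = x + y \<longrightarrow> x \<in> G \<or> y \<in> G)"

definition genus :: "nat set \<Rightarrow> nat" where
  "genus G = card G"

definition multiplicity :: "nat set \<Rightarrow> nat" where
  "multiplicity G = (LEAST s. 0 < s \<and> s \<notin> G)"

definition conductor :: "nat set \<Rightarrow> nat" where
  "conductor G = (LEAST s. 0 < s \<and> (\<forall>t. s + t \<notin> G))"

definition frobenius :: "nat set \<Rightarrow> nat" where
  "frobenius G = conductor G - 1"

definition depth :: "nat set \<Rightarrow> nat" where
  "depth G = nat \<lceil>real (conductor G) / real (multiplicity G)\<rceil>"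

definition symmetric_gapset :: "nat set \<Rightarrow> bool" where
  "symmetric_gapset G \<longleftrightarrow> int (frobenius G) = 2 * int (genus G) - 1"

definition consecutive_gaps :: "nat set \<Rightarrow> nat \<Rightarrow> nat \<Rightarrow> bool" where
  "consecutive_gaps G x y \<longleftrightarrow> x \<in> G \<and> y \<in> G \<and> x < y \<and> (\<forall>z\<in>G. \<not> (x < z \<and> z < y))"

definition pure_sparse :: "nat \<Rightarrow> nat set \<Rightarrow> bool" where
  "pure_sparse \<kappa> G \<longleftrightarrow>
     (\<forall>x y. consecutive_gaps G x y \<longrightarrow> y - x \<le> \<kappa>) \<and>
     (\<exists>x y. consecutive_gaps G x y \<and> y - x = \<kappa>)"

end

theory Submission
  imports Defs
begin

text \<open>The complement of a gapset is closed under addition, and the non-gaps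
  \<open>s \<le> F\<close> are reflected by \<open>s \<mapsto> F - s\<close> injectively into the gaps, so \<open>F < 2g\<close>,
  with equality (symmetry) exactly when the reflection is onto, i.e. when
  \<open>F - j\<close> is a non-gap for every gap \<open>j\<close>.  Two consecutive gaps are at most the
  multiplicity \<open>m\<close> apart, so pure \<open>2n\<close>-sparseness forces \<open>2n \<le> m\<close>; in the symmetric
  case \<open>F - m\<close> and \<open>F\<close> are consecutive gaps, whence \<open>m = 2n\<close>, \<open>F = 3m + 1\<close> and
  the depth is 4.  Conversely depth 4 means \<open>3m < F + 1 \<le> 2g = 6n + 2\<close>, which
  leaves only \<open>F = 3m\<close> (impossible, \<open>3m\<close> is a non-gap) or \<open>F = 6n + 1\<close>.\<close>

lemma gapset_add_notin:
  assumes "gapset G" "a \<notin> G" "b \<notin> G"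
  shows "a + b \<notin> G"
  using assms by (cases "a = 0 \<or> b = 0") (auto simp: gapset_def)

lemma gapset_mult_notin:
  assumes "gapset G" "a \<notin> G"
  shows "k * a \<notin> G"
proof (induction k)
  case 0
  then show ?case using assms(1) by (simp add: gapset_def)
next
  case (Suc k)
  then show ?case using gapset_add_notin[OF assms(1) assms(2) Suc] by simp
qed

lemma conductor_gapset:
  assumes "gapset G" "G \<noteq> {}"
  shows "conductor G = Max G + 1"
  unfolding conductor_def
proof (rule Least_equality)
  have "finite G" using assms(1) by (simp add: gapset_def)
  then have "\<And>z. z \<in> G \<Longrightarrow> z \<le> Max G" by simp
  then show "0 < Max G + 1 \<and> (\<forall>t. Max G + 1 + t \<notin> G)" by fastforce
next
  fix s assume s: "0 < s \<and> (\<forall>t. s + t \<notin> G)"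
  have "Max G \<in> G" using assms by (simp add: gapset_def)
  show "Max G + 1 \<le> s"
  proof (rule ccontr)
    assume "\<not> Max G + 1 \<le> s"
    then have "s + (Max G - s) = Max G" by simp
    then show False using s \<open>Max G \<in> G\<close> by metis
  qed
qed

lemma frobenius_gapset:
  assumes "gapset G" "G \<noteq> {}"
  shows "frobenius G = Max G"
  using conductor_gapset[OF assms] by (simp add: frobenius_def)

lemma
  assumes "finite G"
  shows multiplicity_pos: "0 < multiplicity G"
    and multiplicity_notin: "multiplicity G \<notin> G"
    and less_multiplicity_in: "0 < s \<Longrightarrow> s < multiplicity G \<Longrightarrow> s \<in> G"
proof -
  obtain k where "\<forall>z\<in>G. z \<le> k" using assms finite_nat_set_iff_bounded_le by blast
  then have "Suc k \<notin> G" "0 < Suc k" by auto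
  then show "0 < multiplicity G" "multiplicity G \<notin> G"
    using LeastI[of "\<lambda>s. 0 < s \<and> s \<notin> G"] by (auto simp: multiplicity_def)
  show "0 < s \<Longrightarrow> s < multiplicity G \<Longrightarrow> s \<in> G"
    using not_less_Least[of s "\<lambda>s. 0 < s \<and> s \<notin> G"] by (auto simp: multiplicity_def)
qed

lemma multiplicity_le_Suc_genus:
  assumes "finite G"
  shows "multiplicity G \<le> genus G + 1"
proof -
  have "{1..<multiplicity G} \<subseteq> G" using less_multiplicity_in[OF assms] by auto
  then have "card {1..<multiplicity G} \<le> card G" using assms card_mono by blast
  then show ?thesis by (simp add: genus_def)
qed

lemma consecutive_gaps_le_multiplicity:
  assumes "gapset G" "consecutive_gaps G x y"
  shows "y - x \<le> multiplicity G"
proof (rule ccontr)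
  let ?m = "multiplicity G"
  have "finite G" using assms(1) by (simp add: gapset_def)
  then have m: "?m \<notin> G" "0 < ?m" by (rule multiplicity_notin, rule multiplicity_pos)
  assume "\<not> y - x \<le> ?m"
  then have "y - ?m \<notin> G" and y: "y - ?m + ?m = y" "y \<in> G"
    using assms(2) m(2) by (auto simp: consecutive_gaps_def)
  from gapset_add_notin[OF assms(1) this(1) m(1)] y show False by simp
qed

lemma pure_sparse_le_multiplicity:
  assumes "gapset G" "pure_sparse \<kappa> G"
  shows "\<kappa> \<le> multiplicity G"
  using assms(2) consecutive_gaps_le_multiplicity[OF assms(1)] by (auto simp: pure_sparse_def)

lemma
  assumes "gapset G" "G \<noteq> {}"
  defines "N \<equiv> {0..Max G} - G"
  shows reflect_nongaps_in: "(\<lambda>s. Max G - s) ` N \<subseteq> G"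
    and inj_on_reflect_nongaps: "inj_on (\<lambda>s. Max G - s) N"
    and card_nongaps: "card N + genus G = Max G + 1"
proof -
  have fin: "finite G" and MaxG: "Max G \<in> G" "\<And>z. z \<in> G \<Longrightarrow> z \<le> Max G"
    using assms by (auto simp: gapset_def)
  show "(\<lambda>s. Max G - s) ` N \<subseteq> G"
  proof
    fix w assume "w \<in> (\<lambda>s. Max G - s) ` N"
    then obtain s where "s \<notin> G" "s \<le> Max G" "w = Max G - s" by (auto simp: N_def)
    then show "w \<in> G" using gapset_add_notin[OF assms(1), of s w] MaxG(1) by auto
  qed
  show "inj_on (\<lambda>s. Max G - s) N" by (auto simp: N_def intro!: inj_onI)
  have "G \<subseteq> {0..Max G}" using MaxG(2) by auto
  then show "card N + genus G = Max G + 1"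
    using card_Diff_subset[OF fin] card_mono[of "{0..Max G}" G] by (simp add: N_def genus_def)
qed

lemma frobenius_less_twice_genus:
  assumes "gapset G" "G \<noteq> {}"
  shows "frobenius G < 2 * genus G"
proof -
  have "card ({0..Max G} - G) \<le> genus G"
    using card_inj_on_le[OF inj_on_reflect_nongaps reflect_nongaps_in] assms
    by (simp add: gapset_def genus_def)
  then show ?thesis using card_nongaps[OF assms] frobenius_gapset[OF assms] by simp
qed

lemma symmetric_gapset_reflect_notin:
  assumes "gapset G" "symmetric_gapset G" "j \<in> G"
  shows "frobenius G - j \<notin> G"
proof
  let ?N = "{0..Max G} - G" and ?r = "\<lambda>s. Max G - s"
  have fin: "finite G" and ne: "G \<noteq> {}" using assms(1,3) by (auto simp: gapset_def)
  then have F: "frobenius G = Max G" and "j \<le> Max G"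
    using assms(1,3) frobenius_gapset by auto
  have "card (?r ` ?N) = card G"
    using assms(2) F card_nongaps[OF assms(1) ne]
      card_image[OF inj_on_reflect_nongaps[OF assms(1) ne]]
    by (simp add: symmetric_gapset_def genus_def)
  then have onto: "?r ` ?N = G"
    using card_subset_eq[OF fin reflect_nongaps_in[OF assms(1) ne]] by blast
  assume "frobenius G - j \<in> G"
  then obtain s where "s \<in> ?N" "Max G - j = Max G - s"
    using onto F by (metis imageE)
  moreover have "s \<le> Max G" "s \<notin> G" using \<open>s \<in> ?N\<close> by auto
  ultimately have "s = j" using \<open>j \<le> Max G\<close> by linarith
  then show False using \<open>s \<notin> G\<close> assms(3) by simp
qed

lemma symmetric_gapset_consecutive_gaps:
  assumes "gapset G" "symmetric_gapset G" "multiplicity G < frobenius G"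
  shows "consecutive_gaps G (frobenius G - multiplicity G) (frobenius G)"
proof -
  let ?F = "frobenius G" and ?m = "multiplicity G"
  have fin: "finite G" using assms(1) by (simp add: gapset_def)
  have "G \<noteq> {}" using assms(2) by (auto simp: symmetric_gapset_def genus_def)
  then have FG: "?F \<in> G" and leF: "\<And>z. z \<in> G \<Longrightarrow> z \<le> ?F"
    using frobenius_gapset[OF assms(1)] fin by auto
  have "?F - ?m \<in> G"
  proof (rule ccontr)
    assume "?F - ?m \<notin> G"
    from gapset_add_notin[OF assms(1) this multiplicity_notin[OF fin]] FG assms(3)
    show False by simp
  qed
  moreover have "\<not> (?F - ?m < w \<and> w < ?F)" if "w \<in> G" for w
  proof
    assume "?F - ?m < w \<and> w < ?F"
    then have "?F - w \<in> G" by (intro less_multiplicity_in[OF fin]) auto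
    then show False using symmetric_gapset_reflect_notin[OF assms(1,2)] leF that by fastforce
  qed
  ultimately show ?thesis
    using FG multiplicity_pos[OF fin] assms(3) by (simp add: consecutive_gaps_def)
qed

lemma nat_ceiling_divide_eq_iff:
  assumes "0 < m" "0 < q"
  shows "nat \<lceil>real c / real m\<rceil> = q \<longleftrightarrow> (q - 1) * m < c \<and> c \<le> q * m"
proof -
  have "nat \<lceil>real c / real m\<rceil> = q \<longleftrightarrow> \<lceil>real c / real m\<rceil> = int q"
    using assms(2) by linarith
  also have "\<dots> \<longleftrightarrow> real q - 1 < real c / real m \<and> real c / real m \<le> real q"
    by (simp add: ceiling_eq_iff)
  also have "\<dots> \<longleftrightarrow> (real q - 1) * real m < real c \<and> real c \<le> real q * real m"
    using assms(1) by (simp add: less_divide_eq divide_le_eq)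
  also have "\<dots> \<longleftrightarrow> real ((q - 1) * m) < real c \<and> real c \<le> real (q * m)"
    using assms(2) by (simp add: of_nat_diff)
  also have "\<dots> \<longleftrightarrow> (q - 1) * m < c \<and> c \<le> q * m"
    by (simp only: of_nat_less_iff of_nat_le_iff)
  finally show ?thesis .
qed

lemma depth_eq_iff:
  assumes "finite G" "0 < q"
  shows "depth G = q \<longleftrightarrow>
    (q - 1) * multiplicity G < conductor G \<and> conductor G \<le> q * multiplicity G"
  using nat_ceiling_divide_eq_iff[OF multiplicity_pos[OF assms(1)] assms(2)]
  by (simp add: depth_def)

theorem mainTheorem6:
  fixes n :: nat and G :: "nat set"
  assumes "0 < n"
    and "gapset G"
    and "genus G = 3 * n + 1"
    and "pure_sparse (2 * n) G"
  shows "symmetric_gapset G \<longleftrightarrow> depth G = 4"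
proof -
  let ?F = "frobenius G" and ?m = "multiplicity G"
  have fin: "finite G" using assms(2) by (simp add: gapset_def)
  have "G \<noteq> {}" using assms(3) by (auto simp: genus_def)
  then have c: "conductor G = ?F + 1" and FG: "?F \<in> G" and F_bound: "?F < 6 * n + 2"
    using conductor_gapset[OF assms(2)] frobenius_gapset[OF assms(2)]
      frobenius_less_twice_genus[OF assms(2)] assms(3) fin
    by (simp_all add: frobenius_def)
  have m_lower: "2 * n \<le> ?m" using pure_sparse_le_multiplicity[OF assms(2,4)] .
  have depth4: "depth G = 4 \<longleftrightarrow> 3 * ?m < ?F + 1 \<and> ?F + 1 \<le> 4 * ?m"
    using depth_eq_iff[OF fin, of 4] c by simp
  show ?thesis
  proof
    assume sym: "symmetric_gapset G"
    then have F: "?F = 6 * n + 1" using assms(3) by (simp add: symmetric_gapset_def)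
    have m_less: "?m < ?F" using F multiplicity_le_Suc_genus[OF fin] assms(1,3) by simp
    then have "consecutive_gaps G (?F - ?m) ?F"
      by (rule symmetric_gapset_consecutive_gaps[OF assms(2) sym])
    then have "?F - (?F - ?m) \<le> 2 * n" using assms(4) by (simp add: pure_sparse_def)
    then have "?m \<le> 2 * n" using m_less by simp
    then show "depth G = 4" using m_lower depth4 F assms(1) by simp
  next
    assume "depth G = 4"
    then have "?F = 3 * ?m \<or> ?F = 6 * n + 1" using depth4 F_bound m_lower by linarith
    then show "symmetric_gapset G"
      using FG gapset_mult_notin[OF assms(2) multiplicity_notin[OF fin]] assms(3)
      by (auto simp: symmetric_gapset_def)
  qed
qed

end
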